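(* Let $f:\mathcal X\to\mathbb R$ be bounded and measurable and let $Q$ be a probability distribution on $\mathcal X$. Then for any $\delta\in(0,1]$ and $\varepsilon>0$: (a) $Q(\{x\in\mathcal X:f(x)\le\varepsilon L_{f/\varepsilon}-\varepsilon\log(1/\delta)-\varepsilon D_{\sup\text{-}\log}(P_{f/\varepsilon},Q)\})\le\delta$; (b) $Q(\{x\in\mathcal X:f(x)\le\varepsilon L_{f/\varepsilon}-\varepsilon\log(1/\delta)\})\le\delta+D_{\mathrm{TV}}(P_{f/\varepsilon},Q)$; (c) if $f$ is Lipschitz with minimal Lipschitz constant $|f|_1$, then $Q(\{x\in\mathcal X:f(x)<\varepsilon L_{f/\varepsilon}-\varepsilon\log(2/\delta)-2\delta^{-1}|f|_1W_1(P_{f/\varepsilon},Q)\})\le\delta$.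
   Context: $\mathcal X=[0,1]^d$ with Lebesgue measure. For bounded measurable $h$: $Z_h=\int_{\mathcal X}e^h dx$, $L_h=\log Z_h$, $P_h$ the distribution with density $e^h/Z_h$. $D_{\sup\text{-}\log}(P,Q)=\|\log(dP/dQ)\|_\infty$ ($\infty$ unless mutually absolutely continuous); $D_{\mathrm{TV}}(P,Q)=\sup_A|P(A)-Q(A)|$; $W_1(P,Q)=\inf_{X\sim P,Y\sim Q}\mathbb E\|X-Y\|_2$. Lipschitz constants are with respect to the Euclidean norm. *)

theory Defs
  imports "HOL-Probability.Probability"
begin

text \<open>The domain X = [0,1]^d, rendered as the unit box of an arbitrary Euclidean space
  (so d = DIM('a)).\<close>
definition cube :: "'a::euclidean_space set" where
  "cube = cbox 0 One"

definition lebX :: "'a::euclidean_space measure" where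
  "lebX = restrict_space lborel cube"

definition Zh :: "('a::euclidean_space \<Rightarrow> real) \<Rightarrow> real" where
  "Zh h = (\<integral>x. exp (h x) \<partial>lebX)"

definition Lh :: "('a::euclidean_space \<Rightarrow> real) \<Rightarrow> real" where
  "Lh h = ln (Zh h)"

definition Ph :: "('a::euclidean_space \<Rightarrow> real) \<Rightarrow> 'a measure" where
  "Ph h = density lebX (\<lambda>x. ennreal (exp (h x) / Zh h))"

definition D_suplog :: "'a measure \<Rightarrow> 'a measure \<Rightarrow> ereal" where
  "D_suplog P Q =
     (if absolutely_continuous Q P \<and> absolutely_continuous P Q
      then esssup Q (\<lambda>x. ereal \<bar>ln (enn2real (RN_deriv Q P x))\<bar>)
      else \<infinity>)"

definition D_TV :: "'a measure \<Rightarrow> 'a measure \<Rightarrow> real" where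
  "D_TV P Q = (SUP A \<in> sets P. \<bar>measure P A - measure Q A\<bar>)"

definition couplings :: "'a measure \<Rightarrow> 'b measure \<Rightarrow> ('a \<times> 'b) measure set" where
  "couplings P Q = {\<mu>. sets \<mu> = sets (P \<Otimes>\<^sub>M Q) \<and> distr \<mu> P fst = P \<and> distr \<mu> Q snd = Q}"

definition W1 :: "'a::euclidean_space measure \<Rightarrow> 'a measure \<Rightarrow> ennreal" where
  "W1 P Q = (INF \<mu> \<in> couplings P Q. \<integral>\<^sup>+ z. ennreal (norm (fst z - snd z)) \<partial>\<mu>)"

definition lip_const :: "'a::metric_space set \<Rightarrow> ('a \<Rightarrow> real) \<Rightarrow> real" where
  "lip_const U f = Inf {C. C-lipschitz_on U f}"

end

theory Submission
  imports Defs
begin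

text \<open>
  On the sublevel set where f is at most \<epsilon> L(f/\<epsilon>) + \<epsilon> log s, the Gibbs density
  exp(f/\<epsilon>) / Z(f/\<epsilon>) is at most s, so this set has P(f/\<epsilon>)-probability at most s
  (the cube has volume 1). Each part transfers this bound from P(f/\<epsilon>) to Q:
  (a) since dP/dQ \<ge> exp(-D) Q-almost everywhere, (b) directly by the definition of total
  variation, and (c) through a coupling (X, Y) of P(f/\<epsilon>) and Q: by Lipschitz continuity
  f(Y) can lie far below f(X) only if |X - Y| is large, which Markov's inequality controls
  by the transport cost.
\<close>

section \<open>Gibbs distributions on the cube\<close>

lemma space_lebX [simp]: "space lebX = cube"
  by (simp add: lebX_def space_restrict_space)

lemma cube_in_sets_lebX [simp]: "cube \<in> sets lebX"
  by (metis sets.top space_lebX)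

lemma prob_space_lebX: "prob_space lebX"
proof (rule prob_spaceI)
  have "cube \<in> sets lborel" by (simp add: cube_def)
  then show "emeasure lebX (space lebX) = 1"
    by (simp add: lebX_def emeasure_restrict_space cube_def emeasure_lborel_cbox_eq inner_Basis)
qed

lemma sublevel_sets_lebX:
  fixes f :: "'a::euclidean_space \<Rightarrow> real"
  assumes "f \<in> borel_measurable lebX"
  shows "{x \<in> cube. f x \<le> t} \<in> sets lebX" "{x \<in> cube. f x < t} \<in> sets lebX"
proof -
  have "{x \<in> space lebX. f x \<le> t} \<in> sets lebX"
    using assms by measurable
  moreover have "{x \<in> space lebX. f x < t} \<in> sets lebX"
    using assms by measurable
  ultimately show "{x \<in> cube. f x \<le> t} \<in> sets lebX" "{x \<in> cube. f x < t} \<in> sets lebX"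
    by simp_all
qed

lemma sets_Ph [simp]: "sets (Ph h) = sets lebX"
  by (simp add: Ph_def)

lemma
  fixes h :: "'a::euclidean_space \<Rightarrow> real"
  assumes h: "h \<in> borel_measurable lebX" and "bounded (h ` cube)"
  shows integrable_exp_lebX: "integrable lebX (\<lambda>x. exp (h x))"
    and Zh_pos: "0 < Zh h"
proof -
  interpret prob_space lebX by (rule prob_space_lebX)
  obtain M where M: "\<And>x. x \<in> cube \<Longrightarrow> \<bar>h x\<bar> \<le> M"
    using assms(2) by (auto simp: bounded_iff)
  show int: "integrable lebX (\<lambda>x. exp (h x))"
    by (rule integrable_const_bound[where B = "exp M"]) (use h M in \<open>auto simp: abs_le_iff\<close>)
  have "exp (- M) = (\<integral>x. exp (- M) \<partial>(lebX :: 'a measure))"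
    using prob_space by simp
  also have "\<dots> \<le> Zh h"
    unfolding Zh_def by (rule integral_mono) (use int in \<open>auto dest!: M simp: abs_le_iff\<close>)
  finally show "0 < Zh h"
    using exp_gt_zero less_le_trans by blast
qed

lemma borel_measurable_Gibbs_density [measurable]:
  "h \<in> borel_measurable lebX \<Longrightarrow> (\<lambda>x. ennreal (exp (h x) / Zh h)) \<in> borel_measurable lebX"
  by (intro measurable_compose[OF _ measurable_ennreal] borel_measurable_divide borel_measurable_exp) auto

lemma prob_space_Ph:
  assumes h: "h \<in> borel_measurable lebX" and "bounded (h ` cube)"
  shows "prob_space (Ph h)"
proof (rule prob_spaceI)
  have Z: "0 < Zh h" and int: "integrable lebX (\<lambda>x. exp (h x))"
    using Zh_pos integrable_exp_lebX assms by blast+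
  have "emeasure (Ph h) (space (Ph h)) = (\<integral>\<^sup>+x. ennreal (exp (h x) / Zh h) * indicator cube x \<partial>lebX)"
    unfolding Ph_def using h by (subst emeasure_density) auto
  also have "\<dots> = (\<integral>\<^sup>+x. ennreal (exp (h x) / Zh h) \<partial>lebX)"
    by (rule nn_integral_cong) simp
  also have "\<dots> = ennreal (\<integral>x. exp (h x) / Zh h \<partial>lebX)"
    by (rule nn_integral_eq_integral) (use int Z in auto)
  also have "\<dots> = 1"
    using Z by (simp add: Zh_def)
  finally show "emeasure (Ph h) (space (Ph h)) = 1" .
qed

lemma measure_Ph_sublevel_le:
  assumes h: "h \<in> borel_measurable lebX" and "bounded (h ` cube)" and s: "0 < s"
  shows "measure (Ph h) {x \<in> cube. h x \<le> Lh h + ln s} \<le> s"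
proof -
  interpret lebX: prob_space lebX by (rule prob_space_lebX)
  interpret P: prob_space "Ph h" using prob_space_Ph assms by blast
  define B where "B = {x \<in> cube. h x \<le> Lh h + ln s}"
  have B: "B \<in> sets lebX"
    unfolding B_def using h by (rule sublevel_sets_lebX)
  have Z: "0 < Zh h" using Zh_pos assms by blast
  have density_le: "exp (h x) / Zh h \<le> s" if "x \<in> B" for x
  proof -
    have "exp (h x) \<le> exp (Lh h + ln s)"
      using that by (simp add: B_def)
    also have "\<dots> = Zh h * s"
      using Z s by (simp add: exp_add Lh_def)
    finally show ?thesis
      using Z by (simp add: field_simps)
  qed
  have "emeasure (Ph h) B = (\<integral>\<^sup>+x. ennreal (exp (h x) / Zh h) * indicator B x \<partial>lebX)"
    using B h by (simp add: Ph_def emeasure_density)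
  also have "\<dots> \<le> (\<integral>\<^sup>+x. ennreal s * indicator B x \<partial>lebX)"
    by (rule nn_integral_mono) (auto simp: indicator_def density_le ennreal_leI)
  also have "\<dots> = ennreal s * emeasure lebX B"
    using B by (rule nn_integral_cmult_indicator)
  also have "\<dots> \<le> ennreal s"
    using lebX.emeasure_le_1 mult_left_mono[of _ 1] by fastforce
  finally show ?thesis
    using s by (simp add: B_def P.emeasure_eq_measure)
qed

lemma
  fixes f :: "'a::euclidean_space \<Rightarrow> real"
  assumes f: "f \<in> borel_measurable lebX" "bounded (f ` cube)" and \<epsilon>: "0 < \<epsilon>"
  shows prob_space_Ph_scaled: "prob_space (Ph (\<lambda>x. f x / \<epsilon>))"
    and measure_Ph_scaled_sublevel_le: "0 < s \<Longrightarrow>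
      measure (Ph (\<lambda>x. f x / \<epsilon>)) {x \<in> cube. f x \<le> \<epsilon> * Lh (\<lambda>x. f x / \<epsilon>) + \<epsilon> * ln s} \<le> s"
proof -
  have meas: "(\<lambda>x. f x / \<epsilon>) \<in> borel_measurable lebX"
    using f by measurable
  have "(\<lambda>x. f x / \<epsilon>) ` cube = (\<lambda>y. (1 / \<epsilon>) *\<^sub>R y) ` (f ` cube)"
    by (auto simp: image_image)
  then have bdd: "bounded ((\<lambda>x. f x / \<epsilon>) ` cube)"
    using bounded_scaling f(2) by metis
  show "prob_space (Ph (\<lambda>x. f x / \<epsilon>))"
    using meas bdd by (rule prob_space_Ph)
  assume "0 < s"
  have "{x \<in> cube. f x \<le> \<epsilon> * Lh (\<lambda>x. f x / \<epsilon>) + \<epsilon> * ln s}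
      = {x \<in> cube. f x / \<epsilon> \<le> Lh (\<lambda>x. f x / \<epsilon>) + ln s}"
    using \<epsilon> by (auto simp: field_simps)
  then show "measure (Ph (\<lambda>x. f x / \<epsilon>)) {x \<in> cube. f x \<le> \<epsilon> * Lh (\<lambda>x. f x / \<epsilon>) + \<epsilon> * ln s} \<le> s"
    using measure_Ph_sublevel_le[OF meas bdd \<open>0 < s\<close>] by simp
qed

section \<open>Total variation and sup-log divergence\<close>

lemma measure_le_plus_D_TV:
  assumes P: "finite_measure P" and Q: "finite_measure Q" and A: "A \<in> sets P"
  shows "measure Q A \<le> measure P A + D_TV P Q"
proof -
  have "\<bar>measure P B - measure Q B\<bar> \<le> measure P (space P) + measure Q (space Q)" for B
    using finite_measure.bounded_measure[OF P, of B] finite_measure.bounded_measure[OF Q, of B]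
      measure_nonneg[of P B] measure_nonneg[of Q B] by linarith
  then have "bdd_above ((\<lambda>B. \<bar>measure P B - measure Q B\<bar>) ` sets P)"
    by (intro bdd_aboveI2)
  then have "\<bar>measure P A - measure Q A\<bar> \<le> D_TV P Q"
    unfolding D_TV_def using A by (intro cSUP_upper)
  then show ?thesis by linarith
qed

lemma D_suplog_nonneg:
  assumes "prob_space Q"
  shows "0 \<le> D_suplog P Q"
proof -
  have "0 = esssup Q (\<lambda>x. 0 :: ereal)"
    using assms by (simp add: esssup_const prob_space.emeasure_space_1)
  also have "\<dots> \<le> esssup Q (\<lambda>x. ereal \<bar>ln (enn2real (RN_deriv Q P x))\<bar>)"
    by (rule esssup_mono) auto
  finally show ?thesis
    by (simp add: D_suplog_def)
qed

lemma AE_RN_deriv_ge_exp_D_suplog: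
  assumes P: "prob_space P" and Q: "prob_space Q" and sets_eq: "sets P = sets Q"
    and D: "D_suplog P Q = ereal d"
  shows "AE x in Q. ennreal (exp (- d)) \<le> RN_deriv Q P x"
proof -
  interpret P: prob_space P by (rule P)
  interpret Q: prob_space Q by (rule Q)
  have ac_PQ: "absolutely_continuous Q P" and ac_QP: "absolutely_continuous P Q"
    using D by (auto simp: D_suplog_def split: if_splits)
  define RN where "RN = RN_deriv Q P"
  have density: "density Q RN = P"
    unfolding RN_def using ac_PQ sets_eq by (rule Q.density_RN_deriv)
  have [measurable]: "RN \<in> borel_measurable Q"
    by (simp add: RN_def)
  have AE_bound: "AE x in Q. ereal \<bar>ln (enn2real (RN x))\<bar> \<le> d"
    using D esssup_AE[of "\<lambda>x. ereal \<bar>ln (enn2real (RN x))\<bar>" Q]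
    by (simp add: D_suplog_def RN_def split: if_splits)
  have AE_finite: "AE x in Q. RN x \<noteq> \<infinity>"
    unfolding RN_def using P.sigma_finite_measure_axioms ac_PQ sets_eq by (rule Q.RN_deriv_finite)
  \<comment> \<open>Since ln 0 = 0 in Isabelle, the bound on the logarithm says nothing where RN vanishes;
    that set is P-null, hence Q-null by mutual absolute continuity.\<close>
  have AE_nonzero: "AE x in Q. RN x \<noteq> 0"
  proof -
    define N where "N = {x \<in> space Q. RN x = 0}"
    have N: "N \<in> sets Q"
      unfolding N_def by measurable
    have "emeasure P N = (\<integral>\<^sup>+x. RN x * indicator N x \<partial>Q)"
      using N by (simp add: density[symmetric] emeasure_density)
    also have "\<dots> = 0"
      by (rule nn_integral_0_iff_AE[THEN iffD2]) (auto simp: N_def indicator_def)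
    finally have "N \<in> null_sets Q"
      using ac_QP N sets_eq by (auto simp: absolutely_continuous_def null_sets_def)
    then show ?thesis
      by (rule AE_I') (auto simp: N_def)
  qed
  have "AE x in Q. ennreal (exp (- d)) \<le> RN x"
    using AE_bound AE_finite AE_nonzero
  proof eventually_elim
    case (elim x)
    then obtain r where r: "RN x = ennreal r" "0 < r"
      by (cases "RN x" rule: ennreal_cases) (auto simp: less_le)
    then have "- d \<le> ln r"
      using elim(1) by simp
    then have "exp (- d) \<le> r"
      using r(2) by (metis exp_le_cancel_iff exp_ln)
    then show ?case
      using r(1) by (simp add: ennreal_leI)
  qed
  then show ?thesis
    unfolding RN_def .
qed

lemma measure_le_exp_D_suplog_mult:
  assumes P: "prob_space P" and Q: "prob_space Q" and sets_eq: "sets P = sets Q"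
    and D: "D_suplog P Q = ereal d" and A: "A \<in> sets Q"
  shows "measure Q A \<le> exp d * measure P A"
proof -
  interpret P: prob_space P by (rule P)
  interpret Q: prob_space Q by (rule Q)
  define RN where "RN = RN_deriv Q P"
  have "absolutely_continuous Q P"
    using D by (auto simp: D_suplog_def split: if_splits)
  then have density: "density Q RN = P"
    unfolding RN_def using sets_eq by (rule Q.density_RN_deriv)
  have [measurable]: "RN \<in> borel_measurable Q"
    by (simp add: RN_def)
  have AE_lower: "AE x in Q. ennreal (exp (- d)) \<le> RN x"
    unfolding RN_def using P Q sets_eq D by (rule AE_RN_deriv_ge_exp_D_suplog)
  have "ennreal (exp (- d)) * emeasure Q A = (\<integral>\<^sup>+x. ennreal (exp (- d)) * indicator A x \<partial>Q)"
    using A by (simp add: nn_integral_cmult_indicator)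
  also have "\<dots> \<le> (\<integral>\<^sup>+x. RN x * indicator A x \<partial>Q)"
    by (rule nn_integral_mono_AE) (use AE_lower in \<open>auto elim!: eventually_mono simp: indicator_def\<close>)
  also have "\<dots> = emeasure P A"
    using A by (simp add: density[symmetric] emeasure_density)
  finally have "exp (- d) * measure Q A \<le> measure P A"
    by (simp add: Q.emeasure_eq_measure P.emeasure_eq_measure ennreal_mult[symmetric] ennreal_le_iff)
  then show ?thesis
    by (simp add: exp_minus field_simps)
qed

section \<open>Couplings and Lipschitz functions\<close>

lemma lipschitz_on_lip_const:
  fixes f :: "'a::metric_space \<Rightarrow> real"
  assumes "\<exists>C. C-lipschitz_on U f"
  shows "(lip_const U f)-lipschitz_on U f"
proof -
  define S where "S = {C. C-lipschitz_on U f}"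
  have S: "S \<noteq> {}"
    using assms by (auto simp: S_def)
  have "0 \<le> Inf S"
    using S by (intro cInf_greatest) (auto simp: S_def lipschitz_on_nonneg)
  moreover have "dist (f x) (f y) \<le> Inf S * dist x y" if "x \<in> U" "y \<in> U" for x y
  proof (cases "x = y")
    case False
    have "dist (f x) (f y) / dist x y \<le> Inf S"
      using S that False
      by (intro cInf_greatest) (auto simp: S_def divide_le_eq dest: lipschitz_onD)
    then show ?thesis
      using False by (simp add: divide_le_eq)
  qed simp
  ultimately show ?thesis
    by (auto simp: lip_const_def S_def[symmetric] intro: lipschitz_onI)
qed

lemma borel_measurable_norm_diff_lebX [measurable]:
  "(\<lambda>z. norm (fst z - snd z)) \<in> borel_measurable (lebX \<Otimes>\<^sub>M lebX :: ('a::euclidean_space \<times> 'a) measure)"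
proof -
  have "fst \<in> (lebX \<Otimes>\<^sub>M lebX :: ('a \<times> 'a) measure) \<rightarrow>\<^sub>M lebX"
    by (rule measurable_fst)
  then have "fst \<in> (lebX \<Otimes>\<^sub>M lebX :: ('a \<times> 'a) measure) \<rightarrow>\<^sub>M lborel"
    unfolding lebX_def by (simp add: measurable_restrict_space2_iff)
  then have [measurable]: "fst \<in> borel_measurable (lebX \<Otimes>\<^sub>M lebX :: ('a \<times> 'a) measure)"
    by simp
  have "snd \<in> (lebX \<Otimes>\<^sub>M lebX :: ('a \<times> 'a) measure) \<rightarrow>\<^sub>M lebX"
    by (rule measurable_snd)
  then have "snd \<in> (lebX \<Otimes>\<^sub>M lebX :: ('a \<times> 'a) measure) \<rightarrow>\<^sub>M lborel"
    unfolding lebX_def by (simp add: measurable_restrict_space2_iff)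
  then have [measurable]: "snd \<in> borel_measurable (lebX \<Otimes>\<^sub>M lebX :: ('a \<times> 'a) measure)"
    by simp
  show ?thesis
    by measurable
qed

lemma
  assumes "\<mu> \<in> couplings P Q" "sets P = sets lebX" "sets Q = sets lebX"
  shows sets_coupling_lebX: "sets \<mu> = sets (lebX \<Otimes>\<^sub>M lebX)"
    and space_coupling_lebX: "space \<mu> = cube \<times> cube"
proof -
  show sets_eq: "sets \<mu> = sets (lebX \<Otimes>\<^sub>M lebX)"
    using assms by (simp add: couplings_def cong: sets_pair_measure_cong)
  show "space \<mu> = cube \<times> cube"
    using sets_eq_imp_space_eq[OF sets_eq] by (simp add: space_pair_measure)
qed

lemma product_in_couplings:
  assumes "prob_space P" "prob_space Q"
  shows "P \<Otimes>\<^sub>M Q \<in> couplings P Q"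
proof -
  interpret P: prob_space P by fact
  interpret Q: prob_space Q by fact
  interpret PQ: pair_sigma_finite P Q ..
  have "distr (P \<Otimes>\<^sub>M Q) Q snd = distr (distr (Q \<Otimes>\<^sub>M P) (P \<Otimes>\<^sub>M Q) (\<lambda>(x, y). (y, x))) Q snd"
    by (rule arg_cong[where f = "\<lambda>M. distr M Q snd", OF PQ.distr_pair_swap])
  also have "\<dots> = distr (Q \<Otimes>\<^sub>M P) Q (snd \<circ> (\<lambda>(x, y). (y, x)))"
    by (intro distr_distr measurable_snd measurable_pair_swap')
  also have "snd \<circ> (\<lambda>(x, y). (y, x)) = fst"
    by auto
  also have "distr (Q \<Otimes>\<^sub>M P) Q fst = Q"
    by (rule P.distr_pair_fst)
  finally have "distr (P \<Otimes>\<^sub>M Q) Q snd = Q" .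
  moreover have "distr (P \<Otimes>\<^sub>M Q) P fst = P"
    by (rule Q.distr_pair_fst)
  ultimately show ?thesis
    unfolding couplings_def by blast
qed

lemma W1_lebX_finite:
  fixes P Q :: "'a::euclidean_space measure"
  assumes P: "prob_space P" "sets P = sets lebX" and Q: "prob_space Q" "sets Q = sets lebX"
  shows "W1 P Q < \<infinity>"
proof -
  interpret P: prob_space P by (rule P(1))
  interpret Q: prob_space Q by (rule Q(1))
  interpret PQ: pair_prob_space P Q ..
  have "bounded (cube :: 'a set)"
    by (simp add: cube_def)
  then obtain B where B: "\<And>x :: 'a. x \<in> cube \<Longrightarrow> norm x \<le> B"
    unfolding bounded_iff by blast
  have coupling: "P \<Otimes>\<^sub>M Q \<in> couplings P Q"
    using P(1) Q(1) by (rule product_in_couplings)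
  have "W1 P Q \<le> (\<integral>\<^sup>+z. ennreal (norm (fst z - snd z)) \<partial>(P \<Otimes>\<^sub>M Q))"
    unfolding W1_def using coupling by (rule INF_lower)
  also have "\<dots> \<le> (\<integral>\<^sup>+z. ennreal (2 * B) \<partial>(P \<Otimes>\<^sub>M Q))"
  proof (rule nn_integral_mono)
    fix z assume "z \<in> space (P \<Otimes>\<^sub>M Q)"
    then have "z \<in> cube \<times> cube"
      by (simp only: space_coupling_lebX[OF coupling P(2) Q(2)])
    then have "fst z \<in> cube" "snd z \<in> cube"
      by (simp_all add: mem_Times_iff)
    then have "norm (fst z - snd z) \<le> 2 * B"
      using B[of "fst z"] B[of "snd z"] norm_triangle_ineq4[of "fst z" "snd z"] by linarith
    then show "ennreal (norm (fst z - snd z)) \<le> ennreal (2 * B)"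
      by (rule ennreal_leI)
  qed
  also have "\<dots> = ennreal (2 * B)"
    by (simp only: nn_integral_const PQ.emeasure_space_1 mult_1_right)
  finally show ?thesis
    using ennreal_less_top[of "2 * B"] by (simp add: le_less_trans)
qed

lemma
  assumes "\<mu> \<in> couplings P Q"
  shows measurable_coupling_fst [measurable]: "fst \<in> \<mu> \<rightarrow>\<^sub>M P"
    and measurable_coupling_snd [measurable]: "snd \<in> \<mu> \<rightarrow>\<^sub>M Q"
proof -
  have sets_\<mu>: "sets \<mu> = sets (P \<Otimes>\<^sub>M Q)"
    using assms by (simp add: couplings_def)
  show "fst \<in> \<mu> \<rightarrow>\<^sub>M P" "snd \<in> \<mu> \<rightarrow>\<^sub>M Q"
    by (simp_all add: measurable_cong_sets[OF sets_\<mu> refl])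
qed

lemma
  assumes \<mu>: "\<mu> \<in> couplings P Q"
  shows nn_integral_coupling_fst: "g \<in> borel_measurable P \<Longrightarrow> (\<integral>\<^sup>+z. g (fst z) \<partial>\<mu>) = integral\<^sup>N P g"
    and nn_integral_coupling_snd: "h \<in> borel_measurable Q \<Longrightarrow> (\<integral>\<^sup>+z. h (snd z) \<partial>\<mu>) = integral\<^sup>N Q h"
proof -
  have marginals: "distr \<mu> P fst = P" "distr \<mu> Q snd = Q"
    using \<mu> by (simp_all add: couplings_def)
  show "g \<in> borel_measurable P \<Longrightarrow> (\<integral>\<^sup>+z. g (fst z) \<partial>\<mu>) = integral\<^sup>N P g"
    using nn_integral_distr[OF measurable_coupling_fst[OF \<mu>], of g] marginals by simp
  show "h \<in> borel_measurable Q \<Longrightarrow> (\<integral>\<^sup>+z. h (snd z) \<partial>\<mu>) = integral\<^sup>N Q h"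
    using nn_integral_distr[OF measurable_coupling_snd[OF \<mu>], of h] marginals by simp
qed

lemma coupling_sublevel_bound:
  fixes f :: "'a::euclidean_space \<Rightarrow> real" and P Q :: "'a measure"
  assumes \<mu>: "\<mu> \<in> couplings P Q" and sets: "sets P = sets lebX" "sets Q = sets lebX"
    and f: "f \<in> borel_measurable lebX" and lip: "K-lipschitz_on cube f" and a: "0 < a"
  shows "emeasure Q {y \<in> cube. f y < t} \<le> emeasure P {x \<in> cube. f x \<le> t + K * a}
           + ennreal (1 / a) * (\<integral>\<^sup>+z. ennreal (norm (fst z - snd z)) \<partial>\<mu>)"
proof -
  define A where "A = {y \<in> cube. f y < t}"
  define B where "B = {x \<in> cube. f x \<le> t + K * a}"
  have A: "A \<in> sets Q" and B: "B \<in> sets P"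
    unfolding A_def B_def using sets sublevel_sets_lebX[OF f] by auto
  have "(\<lambda>z. norm (fst z - snd z)) \<in> borel_measurable (lebX \<Otimes>\<^sub>M lebX :: ('a \<times> 'a) measure)"
    by (rule borel_measurable_norm_diff_lebX)
  then have "(\<lambda>z. norm (fst z - snd z)) \<in> borel_measurable \<mu>"
    by (simp only: measurable_cong_sets[OF sets_coupling_lebX[OF \<mu> sets] refl])
  then have dist_meas: "(\<lambda>z. ennreal (norm (fst z - snd z))) \<in> borel_measurable \<mu>"
    by measurable
  have B_meas: "(\<lambda>z. indicator B (fst z) :: ennreal) \<in> borel_measurable \<mu>"
    using B measurable_coupling_fst[OF \<mu>] by measurable
  have pointwise: "indicator A (snd z) \<le> indicator B (fst z) + ennreal (1 / a) * ennreal (norm (fst z - snd z))"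
    if "z \<in> space \<mu>" for z
  proof (cases "snd z \<in> A \<and> fst z \<notin> B")
    case True
    have "z \<in> cube \<times> cube"
      using that by (simp only: space_coupling_lebX[OF \<mu> sets])
    then have "fst z \<in> cube" "snd z \<in> cube"
      by (simp_all add: mem_Times_iff)
    then have "dist (f (fst z)) (f (snd z)) \<le> K * dist (fst z) (snd z)"
      by (rule lipschitz_onD[OF lip])
    then have "f (fst z) - f (snd z) \<le> K * norm (fst z - snd z)"
      by (simp add: dist_norm dist_real_def abs_le_iff)
    moreover have "K * a < f (fst z) - f (snd z)"
      using True \<open>fst z \<in> cube\<close> by (auto simp: A_def B_def)
    ultimately have "K * a < K * norm (fst z - snd z)"
      by linarith
    then have "a < norm (fst z - snd z)"
      using lipschitz_on_nonneg[OF lip] by (rule mult_left_less_imp_less)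
    then have "ennreal 1 \<le> ennreal (1 / a * norm (fst z - snd z))"
      using a by (intro ennreal_leI) (simp add: field_simps)
    also have "\<dots> = ennreal (1 / a) * ennreal (norm (fst z - snd z))"
      using a by (simp add: ennreal_mult[symmetric])
    finally show ?thesis
      using True by (simp add: add_increasing)
  qed (auto simp: indicator_def)
  have "emeasure Q A = (\<integral>\<^sup>+z. indicator A (snd z) \<partial>\<mu>)"
    using A by (simp add: nn_integral_coupling_snd[OF \<mu>])
  also have "\<dots> \<le> (\<integral>\<^sup>+z. indicator B (fst z) + ennreal (1 / a) * ennreal (norm (fst z - snd z)) \<partial>\<mu>)"
    by (rule nn_integral_mono) (rule pointwise)
  also have "\<dots> = (\<integral>\<^sup>+z. indicator B (fst z) \<partial>\<mu>) + ennreal (1 / a) * (\<integral>\<^sup>+z. ennreal (norm (fst z - snd z)) \<partial>\<mu>)"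
    using B_meas dist_meas by (simp add: nn_integral_add nn_integral_cmult)
  also have "(\<integral>\<^sup>+z. indicator B (fst z) \<partial>\<mu>) = emeasure P B"
    using B by (simp add: nn_integral_coupling_fst[OF \<mu>])
  finally show ?thesis
    by (simp add: A_def B_def)
qed

section \<open>Low values of f under Q\<close>

lemma Gibbs_tail_D_suplog:
  fixes f :: "'a::euclidean_space \<Rightarrow> real" and Q :: "'a measure"
  assumes f: "f \<in> borel_measurable lebX" "bounded (f ` cube)"
    and Q: "prob_space Q" "sets Q = sets lebX" and \<delta>: "0 < \<delta>" and \<epsilon>: "0 < \<epsilon>"
  shows "measure Q {x \<in> cube. ereal (f x) \<le>
           ereal (\<epsilon> * Lh (\<lambda>x. f x / \<epsilon>) - \<epsilon> * ln (1 / \<delta>)) - ereal \<epsilon> * D_suplog (Ph (\<lambda>x. f x / \<epsilon>)) Q}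
         \<le> \<delta>"
proof -
  define P where "P = Ph (\<lambda>x. f x / \<epsilon>)"
  define L where "L = Lh (\<lambda>x. f x / \<epsilon>)"
  have P: "prob_space P"
    unfolding P_def using f \<epsilon> by (rule prob_space_Ph_scaled)
  have "0 \<le> D_suplog P Q"
    using Q(1) by (rule D_suplog_nonneg)
  then consider "D_suplog P Q = \<infinity>" | d where "D_suplog P Q = ereal d"
    by (cases "D_suplog P Q") auto
  then show ?thesis
  proof cases
    case 1
    then show ?thesis
      using \<epsilon> \<delta> by (simp add: P_def)
  next
    case (2 d)
    define B where "B = {x \<in> cube. f x \<le> \<epsilon> * L + \<epsilon> * ln (\<delta> * exp (- d))}"
    have threshold: "\<epsilon> * L - \<epsilon> * ln (1 / \<delta>) - \<epsilon> * d = \<epsilon> * L + \<epsilon> * ln (\<delta> * exp (- d))"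
      using \<delta> by (simp add: ln_mult ln_div algebra_simps)
    have "{x \<in> cube. ereal (f x) \<le> ereal (\<epsilon> * L - \<epsilon> * ln (1 / \<delta>)) - ereal \<epsilon> * ereal d}
        = {x \<in> cube. f x \<le> \<epsilon> * L - \<epsilon> * ln (1 / \<delta>) - \<epsilon> * d}" (is "?S = _")
      by simp
    also have "\<dots> = B"
      unfolding threshold B_def ..
    finally have set_eq: "?S = B" .
    have "measure Q B \<le> exp d * measure P B"
      using P Q(1) _ 2 by (rule measure_le_exp_D_suplog_mult)
        (use Q f(1) in \<open>simp_all add: P_def B_def sublevel_sets_lebX\<close>)
    also have "\<dots> \<le> exp d * (\<delta> * exp (- d))"
      using measure_Ph_scaled_sublevel_le[OF f \<epsilon>, of "\<delta> * exp (- d)"] \<delta>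
      by (simp add: B_def P_def L_def)
    also have "\<dots> = \<delta>"
      by (simp add: exp_minus)
    finally show ?thesis
      using set_eq 2 by (simp add: P_def L_def)
  qed
qed

lemma Gibbs_tail_D_TV:
  fixes f :: "'a::euclidean_space \<Rightarrow> real" and Q :: "'a measure"
  assumes f: "f \<in> borel_measurable lebX" "bounded (f ` cube)"
    and Q: "prob_space Q" and \<delta>: "0 < \<delta>" and \<epsilon>: "0 < \<epsilon>"
  shows "measure Q {x \<in> cube. f x \<le> \<epsilon> * Lh (\<lambda>x. f x / \<epsilon>) - \<epsilon> * ln (1 / \<delta>)}
         \<le> \<delta> + D_TV (Ph (\<lambda>x. f x / \<epsilon>)) Q"
proof -
  define P where "P = Ph (\<lambda>x. f x / \<epsilon>)"
  define A where "A = {x \<in> cube. f x \<le> \<epsilon> * Lh (\<lambda>x. f x / \<epsilon>) + \<epsilon> * ln \<delta>}"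
  have P: "prob_space P"
    unfolding P_def using f \<epsilon> by (rule prob_space_Ph_scaled)
  have "measure Q A \<le> measure P A + D_TV P Q"
    using P Q by (intro measure_le_plus_D_TV prob_space.finite_measure)
      (simp_all add: P_def A_def sublevel_sets_lebX f(1))
  also have "measure P A \<le> \<delta>"
    unfolding P_def A_def using f \<epsilon> \<delta> by (rule measure_Ph_scaled_sublevel_le)
  finally show ?thesis
    using \<delta> by (simp add: A_def P_def ln_div)
qed

lemma Gibbs_tail_W1_slack:
  fixes f :: "'a::euclidean_space \<Rightarrow> real" and Q :: "'a measure"
  assumes f: "f \<in> borel_measurable lebX" "bounded (f ` cube)"
    and Q: "prob_space Q" "sets Q = sets lebX" and \<delta>: "0 < \<delta>" and \<epsilon>: "0 < \<epsilon>"
    and K: "K-lipschitz_on cube f"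
    and W: "W1 (Ph (\<lambda>x. f x / \<epsilon>)) Q = ennreal w" "0 \<le> w" and \<eta>: "0 < \<eta>"
  shows "measure Q {x \<in> cube. f x < \<epsilon> * Lh (\<lambda>x. f x / \<epsilon>) - \<epsilon> * ln (2 / \<delta>) - 2 / \<delta> * K * w}
         \<le> \<delta> / 2 * exp (2 * K * \<eta> / (\<delta> * \<epsilon>)) + \<delta> / 2"
proof -
  define P where "P = Ph (\<lambda>x. f x / \<epsilon>)"
  define L where "L = Lh (\<lambda>x. f x / \<epsilon>)"
  define s where "s = \<delta> / 2 * exp (2 * K * \<eta> / (\<delta> * \<epsilon>))"
  interpret P: prob_space P
    unfolding P_def using f \<epsilon> by (rule prob_space_Ph_scaled)
  interpret Q: prob_space Q
    by (rule Q(1))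
  have "W1 P Q < ennreal (w + \<eta>)"
    using W \<eta> by (simp add: P_def ennreal_less_iff)
  then obtain \<mu> where \<mu>: "\<mu> \<in> couplings P Q"
    and cost: "(\<integral>\<^sup>+z. ennreal (norm (fst z - snd z)) \<partial>\<mu>) < ennreal (w + \<eta>)"
    unfolding W1_def by (auto simp: INF_less_iff)
  define a where "a = 2 * (w + \<eta>) / \<delta>"
  have a: "0 < a"
    unfolding a_def using W(2) \<eta> \<delta> by simp
  have "ennreal (1 / a) * ennreal (w + \<eta>) = ennreal (1 / a * (w + \<eta>))"
    by (rule ennreal_mult[symmetric]) (use a W(2) \<eta> in auto)
  also have "1 / a * (w + \<eta>) = \<delta> / 2"
    unfolding a_def using W(2) \<eta> \<delta> by (simp add: field_simps)
  finally have Markov_term: "ennreal (1 / a) * ennreal (w + \<eta>) = ennreal (\<delta> / 2)" .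
  have threshold: "\<epsilon> * L - \<epsilon> * ln (2 / \<delta>) - 2 / \<delta> * K * w + K * a = \<epsilon> * L + \<epsilon> * ln s"
    using \<delta> \<epsilon> by (simp add: a_def s_def ln_mult ln_div field_simps)
  have "emeasure Q {x \<in> cube. f x < \<epsilon> * L - \<epsilon> * ln (2 / \<delta>) - 2 / \<delta> * K * w}
      \<le> emeasure P {x \<in> cube. f x \<le> \<epsilon> * L - \<epsilon> * ln (2 / \<delta>) - 2 / \<delta> * K * w + K * a}
        + ennreal (1 / a) * (\<integral>\<^sup>+z. ennreal (norm (fst z - snd z)) \<partial>\<mu>)"
    using \<mu> _ Q(2) f(1) K a by (rule coupling_sublevel_bound) (simp add: P_def)
  also have "\<dots> = emeasure P {x \<in> cube. f x \<le> \<epsilon> * L + \<epsilon> * ln s}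
        + ennreal (1 / a) * (\<integral>\<^sup>+z. ennreal (norm (fst z - snd z)) \<partial>\<mu>)"
    unfolding threshold ..
  also have "\<dots> \<le> ennreal s + ennreal (1 / a) * ennreal (w + \<eta>)"
  proof (rule add_mono)
    have "measure P {x \<in> cube. f x \<le> \<epsilon> * L + \<epsilon> * ln s} \<le> s"
      unfolding P_def L_def using f \<epsilon> by (rule measure_Ph_scaled_sublevel_le) (simp add: s_def \<delta>)
    then show "emeasure P {x \<in> cube. f x \<le> \<epsilon> * L + \<epsilon> * ln s} \<le> ennreal s"
      by (simp add: P.emeasure_eq_measure ennreal_leI)
    show "ennreal (1 / a) * (\<integral>\<^sup>+z. ennreal (norm (fst z - snd z)) \<partial>\<mu>) \<le> ennreal (1 / a) * ennreal (w + \<eta>)"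
      using cost by (intro mult_left_mono) auto
  qed
  also have "\<dots> = ennreal (s + \<delta> / 2)"
    using \<delta> by (simp add: Markov_term s_def ennreal_plus[symmetric] del: ennreal_plus)
  finally show ?thesis
    using \<delta> by (simp add: Q.emeasure_eq_measure L_def s_def ennreal_le_iff del: ennreal_plus)
qed

lemma Gibbs_tail_W1:
  fixes f :: "'a::euclidean_space \<Rightarrow> real" and Q :: "'a measure"
  assumes f: "f \<in> borel_measurable lebX" "bounded (f ` cube)"
    and Q: "prob_space Q" "sets Q = sets lebX" and \<delta>: "0 < \<delta>" and \<epsilon>: "0 < \<epsilon>"
    and lip: "\<exists>C. C-lipschitz_on cube f"
  shows "measure Q {x \<in> cube. ereal (f x) <
           ereal (\<epsilon> * Lh (\<lambda>x. f x / \<epsilon>) - \<epsilon> * ln (2 / \<delta>))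
           - ereal (2 / \<delta> * lip_const cube f) * enn2ereal (W1 (Ph (\<lambda>x. f x / \<epsilon>)) Q)} \<le> \<delta>"
proof -
  define K where "K = lip_const cube f"
  have K: "K-lipschitz_on cube f"
    unfolding K_def using lip by (rule lipschitz_on_lip_const)
  have "W1 (Ph (\<lambda>x. f x / \<epsilon>)) Q < \<infinity>"
    using prob_space_Ph_scaled[OF f \<epsilon>] sets_Ph Q by (rule W1_lebX_finite)
  then obtain w where W: "W1 (Ph (\<lambda>x. f x / \<epsilon>)) Q = ennreal w" "0 \<le> w"
    by (cases "W1 (Ph (\<lambda>x. f x / \<epsilon>)) Q" rule: ennreal_cases) auto
  define A where "A = {x \<in> cube. f x < \<epsilon> * Lh (\<lambda>x. f x / \<epsilon>) - \<epsilon> * ln (2 / \<delta>) - 2 / \<delta> * K * w}"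
  \<comment> \<open>The infimum defining W1 need not be attained: use couplings of cost below w + \<eta>, and let \<eta> \<rightarrow> 0.\<close>
  have "((\<lambda>\<eta>. \<delta> / 2 * exp (2 * K * \<eta> / (\<delta> * \<epsilon>)) + \<delta> / 2) \<longlongrightarrow> \<delta> / 2 * exp (2 * K * 0 / (\<delta> * \<epsilon>)) + \<delta> / 2)
      (at_right 0)"
    using \<delta> \<epsilon> by (intro tendsto_intros) auto
  moreover have "\<forall>\<^sub>F \<eta> in at_right 0. measure Q A \<le> \<delta> / 2 * exp (2 * K * \<eta> / (\<delta> * \<epsilon>)) + \<delta> / 2"
    using eventually_at_right_less
    by (rule eventually_mono) (unfold A_def, rule Gibbs_tail_W1_slack[OF f Q \<delta> \<epsilon> K W])
  ultimately have "measure Q A \<le> \<delta> / 2 * exp (2 * K * 0 / (\<delta> * \<epsilon>)) + \<delta> / 2"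
    by (rule tendsto_lowerbound) simp
  then show ?thesis
    using W by (simp add: A_def K_def)
qed

theorem proposition15:
  fixes f :: "'a::euclidean_space \<Rightarrow> real" and Q :: "'a measure"
    and \<delta> \<epsilon> :: real
  assumes f_meas: "f \<in> borel_measurable lebX"
    and f_bdd: "bounded (f ` cube)"
    and Q_prob: "prob_space Q"
    and Q_sets: "sets Q = sets lebX"
    and \<delta>: "0 < \<delta>" "\<delta> \<le> 1"
    and \<epsilon>: "0 < \<epsilon>"
  shows
    "(measure Q {x \<in> cube. ereal (f x) \<le>
        ereal (\<epsilon> * Lh (\<lambda>x. f x / \<epsilon>) - \<epsilon> * ln (1 / \<delta>))
        - ereal \<epsilon> * D_suplog (Ph (\<lambda>x. f x / \<epsilon>)) Q} \<le> \<delta>) \<and>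
     (measure Q {x \<in> cube. f x \<le> \<epsilon> * Lh (\<lambda>x. f x / \<epsilon>) - \<epsilon> * ln (1 / \<delta>)}
        \<le> \<delta> + D_TV (Ph (\<lambda>x. f x / \<epsilon>)) Q) \<and>
     ((\<exists>C. C-lipschitz_on cube f) \<longrightarrow>
      measure Q {x \<in> cube. ereal (f x) <
        ereal (\<epsilon> * Lh (\<lambda>x. f x / \<epsilon>) - \<epsilon> * ln (2 / \<delta>))
        - ereal (2 / \<delta> * lip_const cube f) * enn2ereal (W1 (Ph (\<lambda>x. f x / \<epsilon>)) Q)} \<le> \<delta>)"
  using Gibbs_tail_D_suplog[OF f_meas f_bdd Q_prob Q_sets \<delta>(1) \<epsilon>]
    Gibbs_tail_D_TV[OF f_meas f_bdd Q_prob \<delta>(1) \<epsilon>]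
    Gibbs_tail_W1[OF f_meas f_bdd Q_prob Q_sets \<delta>(1) \<epsilon>]
  by blast

end
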